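(* If $A=(A_n)_{n=0}^\infty$ is an Appell sequence and $\lambda$ is an integer partition, then \[ \varphi_A(s_\lambda) = \frac{A_\lambda}{H(\lambda)} = \frac{F_\lambda A_\lambda}{\lvert \lambda \rvert!}. \]
   Context: An Appell sequence is a sequence of polynomials $(A_n)_{n\ge0}$ with $A_0=1$ and $A_n'=nA_{n-1}$ for $n\ge1$. For a partition $\lambda=(\lambda_1\ge\dots\ge\lambda_r>0)$ of length $r$, let $(n_1,\dots,n_r)=(\lambda_r,\lambda_{r-1}+1,\dots,\lambda_1+r-1)$ and define the Wronskian Appell polynomial $A_\lambda=\operatorname{Wr}[A_{n_1},\dots,A_{n_r}]/\Delta(n_1,\dots,n_r)$, where $\operatorname{Wr}$ is the Wronskian determinant and $\Delta(x_1,\dots,x_r)=\prod_{i<j}(x_j-x_i)$ is the Vandermonde determinant ($A_\emptyset=1$). $\Lambda$ is the ring of symmetric functions, $h_m$ the complete homogeneous symmetric functions, $s_\lambda$ the Schur functions, and $\varphi_A:\Lambda\to\mathbb{R}[x]$ is the ring homomorphism defined by $\varphi_A(h_m)=A_m/m!$ for $m\ge1$. $H(\lambda)$ is the product of the hook lengths of $\lambda$ and $F_\lambda$ is the number of standard Young tableaux of shape $\lambda$; $|\lambda|$ is the size of $\lambda$. *)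

theory Defs
  imports "HOL-Computational_Algebra.Polynomial" "Jordan_Normal_Form.Determinant"
begin

definition appell :: "(nat \<Rightarrow> real poly) \<Rightarrow> bool" where
  "appell A \<longleftrightarrow> A 0 = 1 \<and> (\<forall>n\<ge>1. pderiv (A n) = smult (real n) (A (n - 1)))"

definition partition :: "nat list \<Rightarrow> bool" where
  "partition lam \<longleftrightarrow> sorted_wrt (\<ge>) lam \<and> (\<forall>x\<in>set lam. 0 < x)"

definition psize :: "nat list \<Rightarrow> nat" where
  "psize lam = sum_list lam"

text \<open>Cells of the Young diagram, 0-indexed (row i, column j).\<close>
definition cells :: "nat list \<Rightarrow> (nat \<times> nat) set" where
  "cells lam = {(i, j). i < length lam \<and> j < lam ! i}"

definition conj_part :: "nat list \<Rightarrow> nat \<Rightarrow> nat" where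
  "conj_part lam j = card {k. k < length lam \<and> j < lam ! k}"

definition hook_length :: "nat list \<Rightarrow> nat \<Rightarrow> nat \<Rightarrow> nat" where
  "hook_length lam i j = (lam ! i - j) + (conj_part lam j - i) - 1"

definition hook_product :: "nat list \<Rightarrow> nat" where
  "hook_product lam = (\<Prod>c\<in>cells lam. hook_length lam (fst c) (snd c))"

definition SYT :: "nat list \<Rightarrow> ((nat \<times> nat) \<Rightarrow> nat) set" where
  "SYT lam = {T. T \<in> extensional (cells lam) \<and> bij_betw T (cells lam) {1..psize lam}
     \<and> (\<forall>i j. (i, Suc j) \<in> cells lam \<longrightarrow> T (i, j) < T (i, Suc j))
     \<and> (\<forall>i j. (Suc i, j) \<in> cells lam \<longrightarrow> T (i, j) < T (Suc i, j))}"

definition num_SYT :: "nat list \<Rightarrow> nat" where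
  "num_SYT lam = card (SYT lam)"

text \<open>The shifted parts (n_1,...,n_r) = (lam_r, lam_{r-1}+1, ..., lam_1+r-1), 0-indexed.\<close>
definition shifted_parts :: "nat list \<Rightarrow> nat \<Rightarrow> nat" where
  "shifted_parts lam i = lam ! (length lam - 1 - i) + i"

definition wronskian :: "nat \<Rightarrow> (nat \<Rightarrow> real poly) \<Rightarrow> real poly" where
  "wronskian r f = det (mat r r (\<lambda>(i, j). (pderiv ^^ i) (f j)))"

definition vandermonde :: "nat \<Rightarrow> (nat \<Rightarrow> nat) \<Rightarrow> real" where
  "vandermonde r x = (\<Prod>j<r. \<Prod>i<j. (real (x j) - real (x i)))"

definition wronskian_appell :: "(nat \<Rightarrow> real poly) \<Rightarrow> nat list \<Rightarrow> real poly" where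
  "wronskian_appell A lam =
     smult (1 / vandermonde (length lam) (shifted_parts lam))
       (wronskian (length lam) (\<lambda>j. A (shifted_parts lam j)))"

text \<open>Image of h_m under phi_A (h_0 = 1, h_m = 0 for m < 0).\<close>
definition phi_h :: "(nat \<Rightarrow> real poly) \<Rightarrow> int \<Rightarrow> real poly" where
  "phi_h A m = (if m < 0 then 0 else if m = 0 then 1
                else smult (1 / fact (nat m)) (A (nat m)))"

text \<open>phi_A(s_lam), where s_lam is given by the Jacobi-Trudi determinant
  s_lam = det (h_{lam_i - i + j})_{i,j}, and phi_A is a ring homomorphism.\<close>
definition phi_schur :: "(nat \<Rightarrow> real poly) \<Rightarrow> nat list \<Rightarrow> real poly" where
  "phi_schur A lam = det (mat (length lam) (length lam)
     (\<lambda>(i, j). phi_h A (int (lam ! i) - int i + int j)))"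

end

theory Submission
  imports Defs
begin

(*
  Since A_n^(i) = n! phi_A(h_(n-i)), pulling n_j! out of the j-th column of the Wronskian matrix
  and reflecting in the anti-diagonal leaves the Jacobi-Trudi matrix, so
  Wr[A_(n_1), ..., A_(n_r)] = n_1! ... n_r! phi_A(s_lam).
  The Frobenius formula H(lam) Delta(n) = n_1! ... n_r!, proved by stripping off the first column
  of the diagram, turns this into A_lam = H(lam) phi_A(s_lam).
  The hook length formula F_lam H(lam) = |lam|! is proved by induction on |lam|: removing the
  largest entry of a tableau gives F_lam = sum of F_mu over the diagrams mu obtained by removing a
  corner, and via the Frobenius formula this recursion becomes the identity
  sum_i n_i Delta(n - e_i) = (n_1 + ... + n_r - r(r-1)/2) Delta(n), which follows by comparing two
  coefficients of a Lagrange interpolation.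
*)

section \<open>Vandermonde products\<close>

definition vandermonde_prod :: "nat \<Rightarrow> (nat \<Rightarrow> 'a::comm_ring_1) \<Rightarrow> 'a" where
  "vandermonde_prod r x = (\<Prod>j<r. \<Prod>i<j. (x j - x i))"

lemma vandermonde_eq_vandermonde_prod: "vandermonde r x = vandermonde_prod r (\<lambda>k. real (x k))"
  by (simp add: vandermonde_def vandermonde_prod_def)

lemma vandermonde_prod_Suc:
  "vandermonde_prod (Suc r) x = vandermonde_prod r x * (\<Prod>i<r. (x r - x i))"
  by (simp add: vandermonde_prod_def)

lemma vandermonde_prod_cong:
  "(\<And>k. k < r \<Longrightarrow> x k = y k) \<Longrightarrow> vandermonde_prod r x = vandermonde_prod r y"
  unfolding vandermonde_prod_def by (intro prod.cong refl) auto

lemma vandermonde_prod_translate: "vandermonde_prod r (\<lambda>k. x k + c) = vandermonde_prod r x"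
  by (simp add: vandermonde_prod_def)

lemma vandermonde_prod_Suc_shift:
  "vandermonde_prod (Suc r) x = (\<Prod>k<r. (x (Suc k) - x 0)) * vandermonde_prod r (\<lambda>k. x (Suc k))"
proof (induction r)
  case (Suc r)
  have "(\<Prod>i<Suc r. (x (Suc r) - x i)) = (x (Suc r) - x 0) * (\<Prod>i<r. (x (Suc r) - x (Suc i)))"
    by (rule prod.lessThan_Suc_shift)
  then show ?case
    using Suc vandermonde_prod_Suc[of "Suc r" x] vandermonde_prod_Suc[of r "\<lambda>k. x (Suc k)"]
    by (simp add: ac_simps)
qed (simp add: vandermonde_prod_def)

lemma vandermonde_prod_fun_upd:
  assumes "i < r"
  shows "vandermonde_prod r (x(i := c)) * (\<Prod>j\<in>{..<r}-{i}. (x i - x j))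
       = vandermonde_prod r x * (\<Prod>j\<in>{..<r}-{i}. (c - x j))"
  using assms
proof (induction r)
  case (Suc r)
  let ?y = "x(i := c)"
  show ?case
  proof (cases "i = r")
    case True
    have "vandermonde_prod r ?y = vandermonde_prod r x"
      by (rule vandermonde_prod_cong) (use True in auto)
    moreover have "(\<Prod>k<r. (?y r - ?y k)) = (\<Prod>k<r. (c - x k))"
      using True by (intro prod.cong) auto
    moreover have "{..<Suc r} - {i} = {..<r}" using True by auto
    ultimately show ?thesis unfolding vandermonde_prod_Suc using True by (simp only: ac_simps)
  next
    case False
    with Suc have ir: "i < r" by auto
    have split: "{..<Suc r} - {i} = insert r ({..<r} - {i})" using ir by auto
    have new_row: "(\<Prod>k<r. (?y r - ?y k)) = (x r - c) * (\<Prod>k\<in>{..<r}-{i}. (x r - x k))"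
      using ir False by (subst prod.remove[of _ i]) (auto intro!: prod.cong)
    have old_row: "(\<Prod>k<r. (x r - x k)) = (x r - x i) * (\<Prod>k\<in>{..<r}-{i}. (x r - x k))"
      using ir by (subst prod.remove[of _ i]) auto
    have "vandermonde_prod (Suc r) ?y * (\<Prod>j\<in>{..<Suc r}-{i}. (x i - x j))
        = (vandermonde_prod r ?y * (\<Prod>j\<in>{..<r}-{i}. (x i - x j)))
          * ((x r - c) * (x i - x r) * (\<Prod>k\<in>{..<r}-{i}. (x r - x k)))"
      unfolding vandermonde_prod_Suc split new_row using ir by (simp add: ac_simps)
    also have "\<dots> = (vandermonde_prod r x * (\<Prod>j\<in>{..<r}-{i}. (c - x j)))
          * ((x r - x i) * (c - x r) * (\<Prod>k\<in>{..<r}-{i}. (x r - x k)))"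
      unfolding Suc.IH[OF ir] by (simp add: algebra_simps)
    also have "\<dots> = vandermonde_prod (Suc r) x * (\<Prod>j\<in>{..<Suc r}-{i}. (c - x j))"
      unfolding vandermonde_prod_Suc split old_row using ir by (simp add: ac_simps)
    finally show ?thesis .
  qed
qed simp

lemma vandermonde_prod_eq_0:
  assumes "a < b" "b < r" "x a = x b"
  shows "vandermonde_prod r x = 0"
proof -
  have "(\<Prod>i<b. (x b - x i)) = 0"
    by (rule prod_zero) (use assms in \<open>auto intro: bexI[of _ a]\<close>)
  then show ?thesis
    unfolding vandermonde_prod_def by (intro prod_zero) (use assms in auto)
qed

lemma vandermonde_prod_nonzero:
  fixes x :: "nat \<Rightarrow> 'a::idom"
  assumes "inj_on x {..<r}"
  shows "vandermonde_prod r x \<noteq> 0"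
  using assms unfolding vandermonde_prod_def by (fastforce dest: inj_onD)

section \<open>Lagrange interpolation\<close>

lemma degree_prod_monic_linear:
  fixes a :: "'b \<Rightarrow> 'a::idom"
  shows "degree (\<Prod>j\<in>S. [:- a j, 1:]) = card S"
  by (cases "finite S") (simp_all add: degree_prod_eq_sum_degree)

lemma coeff_card_prod_monic_linear:
  fixes a :: "'b \<Rightarrow> 'a::idom"
  shows "coeff (\<Prod>j\<in>S. [:- a j, 1:]) (card S) = 1"
  using lead_coeff_prod[of "\<lambda>j. [:- a j, 1:]" S] by (simp add: degree_prod_monic_linear)

lemma coeff_prod_monic_linear_subleading:
  fixes a :: "'b \<Rightarrow> 'a::idom"
  assumes "finite S" "card S = Suc k"
  shows "coeff (\<Prod>j\<in>S. [:- a j, 1:]) k = - sum a S"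
  using assms
proof (induction S arbitrary: k rule: finite_induct)
  case (insert b T)
  let ?F = "\<Prod>j\<in>T. [:- a j, 1:]"
  have "(\<Prod>j\<in>insert b T. [:- a j, 1:]) = smult (- a b) ?F + pCons 0 ?F"
    using insert by simp
  moreover have "coeff ?F k = 1" "coeff ?F (Suc k) = 0"
    using insert coeff_card_prod_monic_linear[of a T] degree_prod_monic_linear[of a T]
    by (auto intro: coeff_eq_0)
  ultimately show ?case
    using insert by (cases k) auto
qed simp

lemma coeff_prod_monic_linear_subsubleading:
  fixes a :: "'b \<Rightarrow> 'a::idom"
  assumes "finite S" "card S = Suc (Suc k)"
  shows "2 * coeff (\<Prod>j\<in>S. [:- a j, 1:]) k = (sum a S)\<^sup>2 - (\<Sum>j\<in>S. (a j)\<^sup>2)"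
  using assms
proof (induction S arbitrary: k rule: finite_induct)
  case (insert b T)
  let ?F = "\<Prod>j\<in>T. [:- a j, 1:]"
  have split: "(\<Prod>j\<in>insert b T. [:- a j, 1:]) = smult (- a b) ?F + pCons 0 ?F"
    using insert by simp
  show ?case
  proof (cases k)
    case 0
    then obtain c where "T = {c}" using insert card_1_singletonE by auto
    then show ?thesis using 0 insert by (simp add: power2_eq_square algebra_simps)
  next
    case (Suc m)
    have "coeff ?F (Suc m) = - sum a T" "2 * coeff ?F m = (sum a T)\<^sup>2 - (\<Sum>j\<in>T. (a j)\<^sup>2)"
      using insert Suc by (auto intro: coeff_prod_monic_linear_subleading)
    then show ?thesis
      unfolding split using insert Suc by (simp add: power2_eq_square algebra_simps)
  qed
qed simp

definition lagrange_numerator :: "(nat \<Rightarrow> 'a::comm_ring_1) \<Rightarrow> nat \<Rightarrow> nat \<Rightarrow> 'a poly" where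
  "lagrange_numerator x r i = (\<Prod>j\<in>{..<r}-{i}. [:- x j, 1:])"

lemma poly_lagrange_numerator:
  "poly (lagrange_numerator x r i) z = (\<Prod>j\<in>{..<r}-{i}. (z - x j))"
  unfolding lagrange_numerator_def poly_prod by simp

lemma lagrange_numerator_nonzero_at_node:
  fixes x :: "nat \<Rightarrow> 'a::idom"
  assumes "inj_on x {..<r}" "i < r"
  shows "poly (lagrange_numerator x r i) (x i) \<noteq> 0"
  using assms by (auto simp: poly_lagrange_numerator dest: inj_onD)

lemma lagrange_numerator_zero_at_node:
  assumes "k < r" "k \<noteq> i"
  shows "poly (lagrange_numerator x r i) (x k) = 0"
  unfolding poly_lagrange_numerator by (rule prod_zero) (use assms in auto)

lemma lagrange_interpolation:
  fixes x :: "nat \<Rightarrow> 'a::field"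
  assumes inj: "inj_on x {..<r}" and deg: "degree p < r"
  shows "p = (\<Sum>i<r. smult (poly p (x i) / poly (lagrange_numerator x r i) (x i))
                              (lagrange_numerator x r i))"
    (is "p = ?q")
proof (rule poly_eqI_degree)
  show "card (x ` {..<r}) > degree p" "card (x ` {..<r}) > degree ?q"
    using deg card_image[OF inj]
    by (auto intro!: le_less_trans[OF degree_sum_le] le_less_trans[OF degree_smult_le]
             simp: lagrange_numerator_def degree_prod_monic_linear)
  fix z assume "z \<in> x ` {..<r}"
  then obtain k where k: "k < r" "z = x k" by auto
  have "poly ?q z = poly p (x k) / poly (lagrange_numerator x r k) (x k)
                    * poly (lagrange_numerator x r k) (x k)"
    unfolding poly_sum poly_smult k(2) using k(1)
    by (subst sum.remove[of _ k]) (auto simp: lagrange_numerator_zero_at_node)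
  then show "poly p z = poly ?q z"
    using lagrange_numerator_nonzero_at_node[OF inj k(1)] k by simp
qed

lemma interpolation_of_unit_shift:
  fixes x :: "nat \<Rightarrow> 'a::field"
  assumes inj: "inj_on x {..<r}" and r: "r > 0"
  shows "(\<Prod>j<r. [:- x j, 1:]) - (\<Prod>j<r. [:- (x j + 1), 1:])
       = (\<Sum>i<r. smult (poly (lagrange_numerator x r i) (x i - 1) / poly (lagrange_numerator x r i) (x i))
                      (lagrange_numerator x r i))"
    (is "?q = _")
proof -
  have "coeff ?q n = 0" if "n \<ge> r" for n
  proof (cases "n = r")
    case True
    then show ?thesis
      using coeff_card_prod_monic_linear[of x "{..<r}"]
        coeff_card_prod_monic_linear[of "\<lambda>j. x j + 1" "{..<r}"] by simp
  next
    case False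
    then show ?thesis
      using that by (simp add: coeff_eq_0 degree_prod_monic_linear del: minus_add_distrib)
  qed
  then have "degree ?q < r"
    using r by (intro le_less_trans[OF degree_le[of "r - 1"]]) auto
  moreover have "poly ?q (x i) = poly (lagrange_numerator x r i) (x i - 1)" if "i < r" for i
  proof -
    have "(\<Prod>j<r. (x i - x j)) = 0"
      by (rule prod_zero) (use that in \<open>auto intro: bexI[of _ i]\<close>)
    then have "poly ?q (x i) = - (\<Prod>j<r. (x i - (x j + 1)))"
      by (simp add: poly_prod del: minus_add_distrib)
    also have "\<dots> = (\<Prod>j\<in>{..<r}-{i}. (x i - 1 - x j))"
      using that by (subst prod.remove[of _ i]) (auto simp: algebra_simps)
    finally show ?thesis by (simp add: poly_lagrange_numerator)
  qed
  ultimately show ?thesis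
    by (subst lagrange_interpolation[OF inj, of ?q]) (auto intro!: sum.cong)
qed

lemma coeffs_unit_shift_difference:
  fixes x :: "nat \<Rightarrow> 'a::idom"
  assumes r: "r = Suc (Suc m)"
  shows "coeff ((\<Prod>j<r. [:- x j, 1:]) - (\<Prod>j<r. [:- (x j + 1), 1:])) (Suc m) = of_nat r"
    and "2 * coeff ((\<Prod>j<r. [:- x j, 1:]) - (\<Prod>j<r. [:- (x j + 1), 1:])) m
         = - ((of_nat r - 1) * (2 * sum x {..<r} + of_nat r))"
proof -
  define S where "S = sum x {..<r}"
  define Q where "Q = (\<Sum>j<r. (x j)\<^sup>2)"
  define L where "L = (\<Prod>j<r. [:- x j, 1:])"
  define P where "P = (\<Prod>j<r. [:- (x j + 1), 1:])"
  have card_r: "card {..<r} = Suc (Suc m)"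
    using r by simp
  have L1: "coeff L (Suc m) = - S" and L2: "2 * coeff L m = S\<^sup>2 - Q"
    unfolding L_def S_def Q_def
    by (rule coeff_prod_monic_linear_subleading[OF _ card_r]
        coeff_prod_monic_linear_subsubleading[OF _ card_r]; simp)+
  have "(\<Sum>j<r. (x j + 1)\<^sup>2) = Q + 2 * S + of_nat r"
    by (simp add: Q_def S_def power2_eq_square algebra_simps sum.distrib sum_distrib_left)
  moreover have "(\<Sum>j<r. x j + 1) = S + of_nat r"
    by (simp add: S_def sum.distrib)
  ultimately have P1: "coeff P (Suc m) = - (S + of_nat r)"
    and P2: "2 * coeff P m = (S + of_nat r)\<^sup>2 - (Q + 2 * S + of_nat r)"
    using coeff_prod_monic_linear_subleading[OF _ card_r, of "\<lambda>j. x j + 1"]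
      coeff_prod_monic_linear_subsubleading[OF _ card_r, of "\<lambda>j. x j + 1"]
    unfolding P_def by simp_all
  show "coeff (L - P) (Suc m) = of_nat r"
    using L1 P1 by simp
  have "2 * coeff (L - P) m = 2 * coeff L m - 2 * coeff P m"
    by (simp add: right_diff_distrib)
  also have "\<dots> = - ((of_nat r - 1) * (2 * S + of_nat r))"
    unfolding L2 P2 by (simp add: power2_eq_square algebra_simps)
  finally show "2 * coeff (L - P) m = - ((of_nat r - 1) * (2 * sum x {..<r} + of_nat r))"
    unfolding S_def .
qed

lemma sum_nodes_times_decrement_ratios:
  fixes x :: "nat \<Rightarrow> 'a::field_char_0"
  assumes inj: "inj_on x {..<r}"
  shows "(\<Sum>i<r. x i * (poly (lagrange_numerator x r i) (x i - 1) / poly (lagrange_numerator x r i) (x i)))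
       = sum x {..<r} - of_nat r * (of_nat r - 1) / 2"
proof -
  consider "r = 0" | "r = 1" | m where "r = Suc (Suc m)"
    by (metis One_nat_def not0_implies_Suc)
  then show ?thesis
  proof cases
    case 3
    define N where "N = lagrange_numerator x r"
    define w where "w i = poly (N i) (x i - 1) / poly (N i) (x i)" for i
    define S where "S = sum x {..<r}"
    define D where "D = (\<Prod>j<r. [:- x j, 1:]) - (\<Prod>j<r. [:- (x j + 1), 1:])"
    have D: "D = (\<Sum>i<r. smult (w i) (N i))"
      unfolding w_def N_def D_def using interpolation_of_unit_shift[OF inj] 3 by simp
    have N_top: "coeff (N i) (Suc m) = 1" and N_next: "coeff (N i) m = x i - S" if "i < r" for i
      using coeff_card_prod_monic_linear[of x "{..<r} - {i}"] that 3
        coeff_prod_monic_linear_subleading[of "{..<r} - {i}" m x]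
      by (auto simp: N_def S_def lagrange_numerator_def sum_diff1)
    have "(\<Sum>i<r. w i) = coeff D (Suc m)"
      unfolding D coeff_sum by (simp add: N_top)
    then have sum_w: "(\<Sum>i<r. w i) = of_nat r"
      using coeffs_unit_shift_difference(1)[OF 3] by (simp only: D_def)
    have "(\<Sum>i<r. x i * w i) - S * of_nat r = coeff D m"
      unfolding D coeff_sum using sum_w
      by (simp add: N_next right_diff_distrib sum_subtractf sum_distrib_left[symmetric] mult.commute)
    then have "2 * ((\<Sum>i<r. x i * w i) - S * of_nat r) = - ((of_nat r - 1) * (2 * S + of_nat r))"
      using coeffs_unit_shift_difference(2)[OF 3] by (simp only: D_def S_def)
    then have "(\<Sum>i<r. x i * w i) = S - of_nat r * (of_nat r - 1) / 2"
      by (simp add: field_simps)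
    then show ?thesis by (simp add: w_def N_def S_def)
  qed (auto simp: lagrange_numerator_def lessThan_Suc)
qed

lemma sum_vandermonde_prod_decrements:
  fixes x :: "nat \<Rightarrow> 'a::field_char_0"
  assumes inj: "inj_on x {..<r}"
  shows "(\<Sum>i<r. x i * vandermonde_prod r (x(i := x i - 1)))
       = (sum x {..<r} - of_nat r * (of_nat r - 1) / 2) * vandermonde_prod r x"
proof -
  define ratio where
    "ratio i = poly (lagrange_numerator x r i) (x i - 1) / poly (lagrange_numerator x r i) (x i)" for i
  have "vandermonde_prod r (x(i := x i - 1)) = vandermonde_prod r x * ratio i" if "i < r" for i
    using vandermonde_prod_fun_upd[OF that, of x "x i - 1"] lagrange_numerator_nonzero_at_node[OF inj that]
    by (simp add: ratio_def poly_lagrange_numerator field_simps)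
  then have "(\<Sum>i<r. x i * vandermonde_prod r (x(i := x i - 1)))
           = (\<Sum>i<r. x i * ratio i) * vandermonde_prod r x"
    unfolding sum_distrib_right by (intro sum.cong) simp_all
  also have "(\<Sum>i<r. x i * ratio i) = sum x {..<r} - of_nat r * (of_nat r - 1) / 2"
    unfolding ratio_def by (rule sum_nodes_times_decrement_ratios[OF inj])
  finally show ?thesis .
qed

section \<open>The Frobenius formula for the hook product\<close>

lemma sorted_wrt_ge_nth_mono:
  fixes xs :: "'a::linorder list"
  assumes "sorted_wrt (\<ge>) xs" "i \<le> j" "j < length xs"
  shows "xs ! j \<le> xs ! i"
  using assms sorted_wrt_nth_less[OF assms(1), of i j] by (cases "i = j") auto

lemma finite_cells: "finite (cells lam)"
proof -
  have "cells lam \<subseteq> {..<length lam} \<times> {..<sum_list lam}"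
    unfolding cells_def using elem_le_sum_list[of _ lam] by fastforce
  then show ?thesis by (rule finite_subset) auto
qed

lemma cells_append_0: "cells (lam @ [0]) = cells lam"
  unfolding cells_def by (auto simp: nth_append less_Suc_eq)

lemma conj_part_append_0: "conj_part (lam @ [0]) j = conj_part lam j"
proof -
  have "{k. k < length (lam @ [0]) \<and> j < (lam @ [0]) ! k} = {k. k < length lam \<and> j < lam ! k}"
    by (auto simp: nth_append less_Suc_eq)
  then show ?thesis unfolding conj_part_def by simp
qed

lemma hook_product_append_0: "hook_product (lam @ [0]) = hook_product lam"
  unfolding hook_product_def cells_append_0
  by (intro prod.cong refl) (auto simp: hook_length_def conj_part_append_0 cells_def nth_append)

lemma shifted_parts_append_0:
  "shifted_parts (lam @ [0]) 0 = 0"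
  "k < length lam \<Longrightarrow> shifted_parts (lam @ [0]) (Suc k) = Suc (shifted_parts lam k)"
  unfolding shifted_parts_def by (auto simp: nth_append)

lemma vandermonde_prod_shifted_parts_append_0:
  "vandermonde_prod (length (lam @ [0])) (\<lambda>k. real (shifted_parts (lam @ [0]) k))
   = (\<Prod>k<length lam. real (shifted_parts lam k) + 1)
     * vandermonde_prod (length lam) (\<lambda>k. real (shifted_parts lam k))"
proof -
  have "vandermonde_prod (length lam) (\<lambda>k. real (shifted_parts (lam @ [0]) (Suc k)))
      = vandermonde_prod (length lam) (\<lambda>k. real (shifted_parts lam k) + 1)"
    by (intro vandermonde_prod_cong) (simp add: shifted_parts_append_0)
  then show ?thesis
    using vandermonde_prod_translate[of "length lam" "\<lambda>k. real (shifted_parts lam k)" 1]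
    by (simp add: vandermonde_prod_Suc_shift shifted_parts_append_0 add.commute)
qed

lemma prod_fact_shifted_parts_append_0:
  "(\<Prod>k<length (lam @ [0]). fact (shifted_parts (lam @ [0]) k) :: real)
   = (\<Prod>k<length lam. real (shifted_parts lam k) + 1) * (\<Prod>k<length lam. fact (shifted_parts lam k))"
proof -
  have "(\<Prod>k<length (lam @ [0]). fact (shifted_parts (lam @ [0]) k) :: real)
      = (\<Prod>k<length lam. (real (shifted_parts lam k) + 1) * fact (shifted_parts lam k))"
    by (simp add: prod.lessThan_Suc_shift shifted_parts_append_0 algebra_simps
             del: prod.lessThan_Suc)
  then show ?thesis by (simp add: prod.distrib)
qed

definition drop_first_column :: "nat list \<Rightarrow> nat list" where
  "drop_first_column lam = map (\<lambda>a. a - 1) lam"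

lemma length_drop_first_column [simp]: "length (drop_first_column lam) = length lam"
  by (simp add: drop_first_column_def)

lemma sum_list_drop_first_column:
  "\<forall>a\<in>set lam. 0 < a \<Longrightarrow> sum_list (drop_first_column lam) + length lam = sum_list lam"
  by (induction lam) (auto simp: drop_first_column_def)

lemma sorted_drop_first_column:
  "sorted_wrt (\<ge>) (lam :: nat list) \<Longrightarrow> sorted_wrt (\<ge>) (drop_first_column lam)"
  unfolding drop_first_column_def sorted_wrt_map by (rule sorted_wrt_mono_rel) auto

lemma cells_drop_first_column:
  assumes "\<forall>a\<in>set lam. 0 < a"
  shows "cells lam = (\<lambda>i. (i, 0)) ` {..<length lam} \<union> (\<lambda>(i, j). (i, Suc j)) ` cells (drop_first_column lam)"
proof (intro equalityI subsetI)
  fix c assume "c \<in> cells lam"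
  then obtain i j where c: "c = (i, j)" "i < length lam" "j < lam ! i"
    by (auto simp: cells_def)
  show "c \<in> (\<lambda>i. (i, 0)) ` {..<length lam} \<union> (\<lambda>(i, j). (i, Suc j)) ` cells (drop_first_column lam)"
  proof (cases j)
    case (Suc j')
    then have "(i, j') \<in> cells (drop_first_column lam)"
      using c by (auto simp: cells_def drop_first_column_def)
    then show ?thesis using c Suc by force
  qed (use c in auto)
qed (use assms in \<open>auto simp: cells_def drop_first_column_def\<close>)

lemma conj_part_0:
  assumes "\<forall>a\<in>set lam. 0 < a"
  shows "conj_part lam 0 = length lam"
proof -
  have "{k. k < length lam \<and> 0 < lam ! k} = {..<length lam}"
    using assms by auto
  then show ?thesis unfolding conj_part_def by simp
qed

lemma conj_part_Suc: "conj_part lam (Suc j) = conj_part (drop_first_column lam) j"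
  unfolding conj_part_def drop_first_column_def by (auto intro: arg_cong[where f = card])

lemma shifted_parts_drop_first_column:
  assumes "\<forall>a\<in>set lam. 0 < a" "k < length lam"
  shows "shifted_parts (drop_first_column lam) k = shifted_parts lam k - 1"
    and "shifted_parts lam k \<ge> 1"
proof -
  have "lam ! (length lam - 1 - k) > 0"
    using assms by auto
  then show "shifted_parts (drop_first_column lam) k = shifted_parts lam k - 1" "shifted_parts lam k \<ge> 1"
    unfolding shifted_parts_def drop_first_column_def using assms(2) by auto
qed

lemma prod_reflect_lessThan:
  "(\<Prod>i<(r::nat). g (r - 1 - i)) = (\<Prod>i<r. (g i :: 'a::comm_monoid_mult))"
  by (rule prod.reindex_bij_witness[of _ "\<lambda>i. r - 1 - i" "\<lambda>i. r - 1 - i"]) auto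

lemma sum_reflect_lessThan:
  "(\<Sum>i<(r::nat). g (r - 1 - i)) = (\<Sum>i<r. (g i :: 'a::comm_monoid_add))"
  by (rule sum.reindex_bij_witness[of _ "\<lambda>i. r - 1 - i" "\<lambda>i. r - 1 - i"]) auto

text \<open>The first column consists of the cells (i, 0), whose hook lengths are the shifted parts.\<close>

lemma hook_product_drop_first_column:
  assumes pos: "\<forall>a\<in>set lam. 0 < a"
  shows "hook_product lam = (\<Prod>k<length lam. shifted_parts lam k) * hook_product (drop_first_column lam)"
proof -
  let ?r = "length lam"
  have inj_col: "inj_on (\<lambda>i. (i, 0::nat)) {..<?r}" and inj_shift: "inj_on (\<lambda>(i, j). (i, Suc j)) (cells (drop_first_column lam))"
    by (auto simp: inj_on_def)
  have "hook_product lam = (\<Prod>c\<in>(\<lambda>i. (i, 0)) ` {..<?r}. hook_length lam (fst c) (snd c))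
      * (\<Prod>c\<in>(\<lambda>(i, j). (i, Suc j)) ` cells (drop_first_column lam). hook_length lam (fst c) (snd c))"
    unfolding hook_product_def cells_drop_first_column[OF pos]
    by (rule prod.union_disjoint) (auto simp: finite_cells)
  also have "(\<Prod>c\<in>(\<lambda>i. (i, 0)) ` {..<?r}. hook_length lam (fst c) (snd c))
           = (\<Prod>i<?r. shifted_parts lam (?r - 1 - i))"
    unfolding prod.reindex[OF inj_col]
    by (intro prod.cong refl) (auto simp: hook_length_def conj_part_0[OF pos] shifted_parts_def)
  also have "\<dots> = (\<Prod>k<?r. shifted_parts lam k)"
    by (rule prod_reflect_lessThan)
  also have "(\<Prod>c\<in>(\<lambda>(i, j). (i, Suc j)) ` cells (drop_first_column lam). hook_length lam (fst c) (snd c))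
           = hook_product (drop_first_column lam)"
    unfolding prod.reindex[OF inj_shift] hook_product_def
    by (intro prod.cong refl)
       (auto simp: hook_length_def conj_part_Suc cells_def drop_first_column_def)
  finally show ?thesis .
qed

lemma vandermonde_prod_shifted_parts_drop_first_column:
  assumes "\<forall>a\<in>set lam. 0 < a"
  shows "vandermonde_prod (length lam) (\<lambda>k. real (shifted_parts (drop_first_column lam) k))
       = vandermonde_prod (length lam) (\<lambda>k. real (shifted_parts lam k))"
proof -
  have "vandermonde_prod (length lam) (\<lambda>k. real (shifted_parts (drop_first_column lam) k))
      = vandermonde_prod (length lam) (\<lambda>k. real (shifted_parts lam k) + (- 1))"
  proof (intro vandermonde_prod_cong)
    fix k assume "k < length lam"
    with shifted_parts_drop_first_column[OF assms this]
    show "real (shifted_parts (drop_first_column lam) k) = real (shifted_parts lam k) + (- 1)"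
      by simp
  qed
  then show ?thesis by (simp only: vandermonde_prod_translate)
qed

lemma prod_fact_shifted_parts_drop_first_column:
  assumes "\<forall>a\<in>set lam. 0 < a"
  shows "(\<Prod>k<length lam. fact (shifted_parts lam k) :: real)
       = (\<Prod>k<length lam. real (shifted_parts lam k))
         * (\<Prod>k<length lam. fact (shifted_parts (drop_first_column lam) k))"
proof -
  have "(\<Prod>k<length lam. fact (shifted_parts lam k) :: real)
      = (\<Prod>k<length lam. real (shifted_parts lam k) * fact (shifted_parts (drop_first_column lam) k))"
  proof (intro prod.cong refl)
    fix k assume "k \<in> {..<length lam}"
    then have "k < length lam" by simp
    with shifted_parts_drop_first_column[OF assms this]
    show "fact (shifted_parts lam k) = real (shifted_parts lam k) * fact (shifted_parts (drop_first_column lam) k)"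
      by (simp add: fact_reduce)
  qed
  then show ?thesis by (simp add: prod.distrib)
qed

lemma sorted_nat_list_cases:
  fixes lam :: "nat list"
  assumes "sorted_wrt (\<ge>) lam"
  obtains "lam = []" | l where "lam = l @ [0]" | "lam \<noteq> []" "\<forall>a\<in>set lam. 0 < a"
proof (cases "lam = [] \<or> last lam = 0")
  case True
  then show thesis using that(1,2) by (metis append_butlast_last_id)
next
  case False
  then have "lam ! (length lam - 1) \<le> a" if "a \<in> set lam" for a
    using that sorted_wrt_ge_nth_mono[OF assms] by (auto simp: in_set_conv_nth)
  then show thesis using that(3) False by (fastforce simp: last_conv_nth)
qed

text \<open>Stripping the first column can create zero parts, so the formula is proved for all
  weakly decreasing lists; appending a zero part raises every shifted part by one and adds
  the shifted part 0.\<close>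

theorem hook_product_mult_vandermonde_prod:
  fixes lam :: "nat list"
  assumes "sorted_wrt (\<ge>) lam"
  shows "real (hook_product lam) * vandermonde_prod (length lam) (\<lambda>k. real (shifted_parts lam k))
       = (\<Prod>k<length lam. fact (shifted_parts lam k))"
  using assms
proof (induction "sum_list lam + length lam" arbitrary: lam rule: less_induct)
  case less
  from less.prems show ?case
  proof (cases rule: sorted_nat_list_cases)
    case 1
    then show ?thesis by (simp add: hook_product_def cells_def vandermonde_prod_def)
  next
    case (2 l)
    have "sorted_wrt (\<ge>) l" using less.prems 2 by (simp add: sorted_wrt_append)
    then have "real (hook_product l) * vandermonde_prod (length l) (\<lambda>k. real (shifted_parts l k))
             = (\<Prod>k<length l. fact (shifted_parts l k))"
      using 2 by (intro less.hyps) simp_all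
    then show ?thesis
      unfolding 2 hook_product_append_0 vandermonde_prod_shifted_parts_append_0
        prod_fact_shifted_parts_append_0
      by (simp add: ac_simps)
  next
    case 3
    have "real (hook_product (drop_first_column lam))
            * vandermonde_prod (length lam) (\<lambda>k. real (shifted_parts (drop_first_column lam) k))
          = (\<Prod>k<length lam. fact (shifted_parts (drop_first_column lam) k))"
      using less.hyps[OF _ sorted_drop_first_column[OF less.prems]] sum_list_drop_first_column[OF 3(2)] 3(1)
      by simp
    then show ?thesis
      unfolding hook_product_drop_first_column[OF 3(2)] prod_fact_shifted_parts_drop_first_column[OF 3(2)]
        vandermonde_prod_shifted_parts_drop_first_column[OF 3(2), symmetric]
      by (simp add: ac_simps)
  qed
qed

section \<open>The hook length formula\<close>

definition corners :: "nat list \<Rightarrow> nat set" where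
  "corners lam = {i. i < length lam \<and> 0 < lam ! i \<and> (Suc i < length lam \<longrightarrow> lam ! Suc i < lam ! i)}"

definition remove_corner :: "nat list \<Rightarrow> nat \<Rightarrow> nat list" where
  "remove_corner lam i = lam[i := lam ! i - 1]"

lemma length_remove_corner [simp]: "length (remove_corner lam i) = length lam"
  by (simp add: remove_corner_def)

lemma corner_in_cells: "i \<in> corners lam \<Longrightarrow> (i, lam ! i - 1) \<in> cells lam"
  by (auto simp: corners_def cells_def)

lemma cells_remove_corner:
  assumes "i \<in> corners lam"
  shows "cells (remove_corner lam i) = cells lam - {(i, lam ! i - 1)}"
proof -
  have "i < length lam" "0 < lam ! i"
    using assms by (auto simp: corners_def)
  then have "(a, b) \<in> cells (remove_corner lam i) \<longleftrightarrow> (a, b) \<in> cells lam - {(i, lam ! i - 1)}" for a b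
    by (cases "a = i") (auto simp: cells_def remove_corner_def)
  then show ?thesis by auto
qed

lemma psize_remove_corner: "i \<in> corners lam \<Longrightarrow> psize (remove_corner lam i) = psize lam - 1"
  unfolding psize_def remove_corner_def corners_def by (auto simp: sum_list_update)

lemma psize_pos_if_corner: "i \<in> corners lam \<Longrightarrow> psize lam \<ge> 1"
  unfolding psize_def corners_def using elem_le_sum_list[of i lam] by auto

lemma sorted_remove_corner:
  fixes lam :: "nat list"
  assumes sorted: "sorted_wrt (\<ge>) lam" and i: "i \<in> corners lam"
  shows "sorted_wrt (\<ge>) (remove_corner lam i)"
  unfolding sorted_wrt_iff_nth_less
proof (intro allI impI)
  fix a b assume ab: "a < b" "b < length (remove_corner lam i)"
  have "lam ! b \<le> lam ! a" "lam ! b \<le> lam ! Suc a"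
    using sorted_wrt_ge_nth_mono[OF sorted] ab by auto
  then show "remove_corner lam i ! b \<le> remove_corner lam i ! a"
    using i ab by (auto simp: remove_corner_def corners_def nth_list_update)
qed

lemma cells_left_closed: "(a, Suc b) \<in> cells lam \<Longrightarrow> (a, b) \<in> cells lam"
  by (auto simp: cells_def)

lemma cells_up_closed:
  fixes lam :: "nat list"
  assumes "sorted_wrt (\<ge>) lam" "(Suc a, b) \<in> cells lam"
  shows "(a, b) \<in> cells lam"
  using assms sorted_wrt_ge_nth_mono[OF assms(1), of a "Suc a"] by (auto simp: cells_def)

lemma SYT_I:
  assumes "T \<in> extensional (cells lam)" "bij_betw T (cells lam) {1..psize lam}"
    and "\<And>i j. (i, Suc j) \<in> cells lam \<Longrightarrow> T (i, j) < T (i, Suc j)"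
    and "\<And>i j. (Suc i, j) \<in> cells lam \<Longrightarrow> T (i, j) < T (Suc i, j)"
  shows "T \<in> SYT lam"
  using assms by (simp add: SYT_def)

lemma SYT_D:
  assumes "T \<in> SYT lam"
  shows "T \<in> extensional (cells lam)" "bij_betw T (cells lam) {1..psize lam}"
    and "(i, Suc j) \<in> cells lam \<Longrightarrow> T (i, j) < T (i, Suc j)"
    and "(Suc i, j) \<in> cells lam \<Longrightarrow> T (i, j) < T (Suc i, j)"
  using assms by (simp_all add: SYT_def)

lemma SYT_le_psize: "T \<in> SYT lam \<Longrightarrow> c \<in> cells lam \<Longrightarrow> T c \<le> psize lam"
  using SYT_D(2) by (fastforce simp: bij_betw_def)

lemma finite_SYT: "finite (SYT lam)"
proof (rule finite_subset)
  show "SYT lam \<subseteq> PiE (cells lam) (\<lambda>_. {1..psize lam})"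
  proof
    fix T assume "T \<in> SYT lam"
    then have "T \<in> extensional (cells lam)" "bij_betw T (cells lam) {1..psize lam}"
      by (auto simp: SYT_def)
    then show "T \<in> PiE (cells lam) (\<lambda>_. {1..psize lam})"
      by (auto simp: PiE_iff bij_betw_def)
  qed
qed (intro finite_PiE finite_cells; simp)

lemma cells_psize_0:
  assumes "psize lam = 0"
  shows "cells lam = {}"
proof -
  have False if "i < length lam" "j < lam ! i" for i j
    using elem_le_sum_list[of i lam] that assms unfolding psize_def by linarith
  then show ?thesis by (auto simp: cells_def)
qed

lemma card_SYT_psize_0:
  assumes "psize lam = 0"
  shows "card (SYT lam) = 1"
proof -
  have "SYT lam = {\<lambda>_. undefined}"
  proof (intro equalityI subsetI)
    fix T assume "T \<in> SYT lam"
    then show "T \<in> {\<lambda>_. undefined}"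
      by (simp add: SYT_def cells_psize_0[OF assms])
  qed (simp add: SYT_def cells_psize_0[OF assms] assms bij_betw_def)
  then show ?thesis by simp
qed

lemma hook_product_psize_0: "psize lam = 0 \<Longrightarrow> hook_product lam = 1"
  by (simp add: hook_product_def cells_psize_0)

lemma SYT_max_at_corner:
  assumes n: "psize lam > 0" and T: "T \<in> SYT lam"
  shows "\<exists>i\<in>corners lam. T (i, lam ! i - 1) = psize lam"
proof -
  have "psize lam \<in> T ` cells lam"
    using T n by (auto simp: SYT_def bij_betw_def)
  then obtain i j where c: "(i, j) \<in> cells lam" "T (i, j) = psize lam"
    by auto
  have "(i, Suc j) \<notin> cells lam"
    using c T SYT_le_psize[OF T, of "(i, Suc j)"] by (fastforce simp: SYT_def)
  then have j: "j = lam ! i - 1"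
    using c by (auto simp: cells_def)
  have "(Suc i, j) \<notin> cells lam"
    using c T SYT_le_psize[OF T, of "(Suc i, j)"] by (fastforce simp: SYT_def)
  then have "i \<in> corners lam"
    using c j by (auto simp: cells_def corners_def)
  then show ?thesis using c j by auto
qed

lemma corner_cell_has_no_successor:
  assumes "i \<in> corners lam"
  shows "(i, Suc (lam ! i - 1)) \<notin> cells lam" "(Suc i, lam ! i - 1) \<notin> cells lam"
  using assms by (auto simp: corners_def cells_def)

lemma restrict_SYT_remove_corner:
  fixes lam :: "nat list"
  assumes sorted: "sorted_wrt (\<ge>) lam" and i: "i \<in> corners lam"
    and T: "T \<in> SYT lam" "T (i, lam ! i - 1) = psize lam"
  shows "restrict T (cells (remove_corner lam i)) \<in> SYT (remove_corner lam i)"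
proof (rule SYT_I)
  let ?c = "(i, lam ! i - 1)"
  let ?l = "remove_corner lam i"
  have cells_l: "cells ?l = cells lam - {?c}"
    by (rule cells_remove_corner[OF i])
  have "bij_betw T (cells lam - {?c}) ({1..psize lam} - {psize lam})"
    by (rule bij_betw_DiffI[OF SYT_D(2)[OF T(1)]])
      (use T(2) corner_in_cells[OF i] psize_pos_if_corner[OF i] in auto)
  moreover have "{1..psize lam} - {psize lam} = {1..psize ?l}"
    using psize_remove_corner[OF i] psize_pos_if_corner[OF i] by auto
  ultimately have "bij_betw T (cells ?l) {1..psize ?l}"
    unfolding cells_l by simp
  then show "bij_betw (restrict T (cells ?l)) (cells ?l) {1..psize ?l}"
    by (rule iffD1[OF bij_betw_cong, rotated]) simp
  fix a b
  show "restrict T (cells ?l) (a, b) < restrict T (cells ?l) (a, Suc b)" if "(a, Suc b) \<in> cells ?l"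
    using that cells_left_closed[OF that] SYT_D(3)[OF T(1)] cells_l by simp
  show "restrict T (cells ?l) (a, b) < restrict T (cells ?l) (Suc a, b)" if "(Suc a, b) \<in> cells ?l"
    using that cells_up_closed[OF sorted_remove_corner[OF sorted i] that] SYT_D(4)[OF T(1)] cells_l by simp
qed simp

lemma extend_SYT_remove_corner:
  fixes lam :: "nat list"
  assumes sorted: "sorted_wrt (\<ge>) lam" and i: "i \<in> corners lam"
    and T': "T' \<in> SYT (remove_corner lam i)"
  shows "T'((i, lam ! i - 1) := psize lam) \<in> SYT lam"
proof -
  let ?c = "(i, lam ! i - 1)"
  let ?l = "remove_corner lam i"
  let ?T = "T'(?c := psize lam)"
  have cells_l: "cells ?l = cells lam - {?c}"
    by (rule cells_remove_corner[OF i])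
  have c_notin: "?c \<notin> cells ?l"
    using cells_l by simp
  have n: "psize ?l = psize lam - 1" "psize lam \<ge> 1"
    using psize_remove_corner[OF i] psize_pos_if_corner[OF i] by auto
  have "bij_betw ?T (cells ?l) {1..psize ?l}"
    using SYT_D(2)[OF T'] by (rule iffD1[OF bij_betw_cong, rotated]) (use c_notin in auto)
  then have "bij_betw ?T (cells ?l \<union> {?c}) ({1..psize ?l} \<union> {?T ?c})"
    by (rule notIn_Un_bij_betw[OF c_notin, rotated]) (use n in simp)
  moreover have "cells ?l \<union> {?c} = cells lam"
    using cells_l corner_in_cells[OF i] by blast
  moreover have "{1..psize ?l} \<union> {?T ?c} = {1..psize lam}"
    using n by (cases "psize lam") (simp_all add: atLeastAtMostSuc_conv)
  ultimately have bij: "bij_betw ?T (cells lam) {1..psize lam}"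
    by simp
  have increasing: "?T p < ?T q"
    if "p \<in> cells ?l" "q \<in> cells lam" "q \<in> cells ?l \<Longrightarrow> T' p < T' q" for p q
  proof -
    have "p \<noteq> ?c"
      using that(1) c_notin by blast
    moreover have "T' p < psize lam"
      using SYT_le_psize[OF T' that(1)] n by linarith
    moreover have "q \<noteq> ?c \<Longrightarrow> q \<in> cells ?l"
      using that(2) cells_l by blast
    ultimately show ?thesis
      using that(3) by (cases "q = ?c") simp_all
  qed
  show ?thesis
  proof (rule SYT_I[OF _ bij])
    show "?T \<in> extensional (cells lam)"
      using SYT_D(1)[OF T'] cells_l corner_in_cells[OF i] by (auto simp: extensional_def)
    fix a b
    show "?T (a, b) < ?T (a, Suc b)" if right: "(a, Suc b) \<in> cells lam"
    proof (rule increasing[OF _ right])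
      show "(a, b) \<in> cells ?l"
        using cells_left_closed[OF right] corner_cell_has_no_successor(1)[OF i] right cells_l by auto
      show "T' (a, b) < T' (a, Suc b)" if "(a, Suc b) \<in> cells ?l"
        using T' that by (rule SYT_D(3))
    qed
    show "?T (a, b) < ?T (Suc a, b)" if below: "(Suc a, b) \<in> cells lam"
    proof (rule increasing[OF _ below])
      show "(a, b) \<in> cells ?l"
        using cells_up_closed[OF sorted below] corner_cell_has_no_successor(2)[OF i] below cells_l by auto
      show "T' (a, b) < T' (Suc a, b)" if "(Suc a, b) \<in> cells ?l"
        using T' that by (rule SYT_D(4))
    qed
  qed
qed

lemma bij_betw_SYT_remove_corner:
  fixes lam :: "nat list"
  assumes sorted: "sorted_wrt (\<ge>) lam" and i: "i \<in> corners lam"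
  shows "bij_betw (\<lambda>T. restrict T (cells (remove_corner lam i)))
           {T \<in> SYT lam. T (i, lam ! i - 1) = psize lam} (SYT (remove_corner lam i))"
proof (rule bij_betw_byWitness[where f' = "\<lambda>T'. T'((i, lam ! i - 1) := psize lam)"])
  let ?c = "(i, lam ! i - 1)"
  let ?l = "remove_corner lam i"
  have cells_l: "cells ?l = cells lam - {?c}"
    by (rule cells_remove_corner[OF i])
  show "\<forall>T\<in>{T \<in> SYT lam. T ?c = psize lam}. (restrict T (cells ?l))(?c := psize lam) = T"
  proof (intro ballI ext)
    fix T x assume "T \<in> {T \<in> SYT lam. T ?c = psize lam}"
    then show "((restrict T (cells ?l))(?c := psize lam)) x = T x"
      using extensional_arb[OF SYT_D(1), of T lam x] cells_l by (cases "x = ?c") auto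
  qed
  show "\<forall>T'\<in>SYT ?l. restrict (T'(?c := psize lam)) (cells ?l) = T'"
  proof (intro ballI ext)
    fix T' x assume "T' \<in> SYT ?l"
    then show "restrict (T'(?c := psize lam)) (cells ?l) x = T' x"
      using extensional_arb[OF SYT_D(1), of T' ?l x] cells_l by (cases "x \<in> cells ?l") auto
  qed
  show "(\<lambda>T. restrict T (cells ?l)) ` {T \<in> SYT lam. T ?c = psize lam} \<subseteq> SYT ?l"
    using restrict_SYT_remove_corner[OF sorted i] by blast
  show "(\<lambda>T'. T'(?c := psize lam)) ` SYT ?l \<subseteq> {T \<in> SYT lam. T ?c = psize lam}"
    using extend_SYT_remove_corner[OF sorted i] by auto
qed

lemma card_SYT_eq_sum_corners:
  fixes lam :: "nat list"
  assumes sorted: "sorted_wrt (\<ge>) lam" and n: "psize lam > 0"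
  shows "card (SYT lam) = (\<Sum>i\<in>corners lam. card (SYT (remove_corner lam i)))"
proof -
  define A where "A i = {T \<in> SYT lam. T (i, lam ! i - 1) = psize lam}" for i
  have "SYT lam = (\<Union>i\<in>corners lam. A i)"
    using SYT_max_at_corner[OF n] by (auto simp: A_def)
  then have "card (SYT lam) = card (\<Union>i\<in>corners lam. A i)"
    by simp
  also have "\<dots> = (\<Sum>i\<in>corners lam. card (A i))"
  proof (rule card_UN_disjoint)
    show "finite (corners lam)"
      by (rule finite_subset[of _ "{..<length lam}"]) (auto simp: corners_def)
    show "\<forall>i\<in>corners lam. finite (A i)"
      by (simp add: A_def finite_SYT)
    show "\<forall>i\<in>corners lam. \<forall>j\<in>corners lam. i \<noteq> j \<longrightarrow> A i \<inter> A j = {}"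
    proof (intro ballI impI)
      fix i j assume ij: "i \<in> corners lam" "j \<in> corners lam" "i \<noteq> j"
      show "A i \<inter> A j = {}"
      proof (rule equals0I)
        fix T assume "T \<in> A i \<inter> A j"
        then have "T (i, lam ! i - 1) = T (j, lam ! j - 1)" "inj_on T (cells lam)"
          using SYT_D(2) by (auto simp: A_def bij_betw_def)
        then show False
          using corner_in_cells[OF ij(1)] corner_in_cells[OF ij(2)] ij(3) by (auto dest: inj_onD)
      qed
    qed
  qed
  also have "\<dots> = (\<Sum>i\<in>corners lam. card (SYT (remove_corner lam i)))"
    unfolding A_def using bij_betw_same_card[OF bij_betw_SYT_remove_corner[OF sorted]] by simp
  finally show ?thesis .
qed

lemma shifted_parts_strict_mono:
  fixes lam :: "nat list"
  assumes "sorted_wrt (\<ge>) lam" "k < k'" "k' < length lam"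
  shows "shifted_parts lam k < shifted_parts lam k'"
proof -
  have "lam ! (length lam - 1 - k) \<le> lam ! (length lam - 1 - k')"
    using assms by (intro sorted_wrt_ge_nth_mono) auto
  then show ?thesis
    using assms(2,3) by (simp add: shifted_parts_def)
qed

lemma inj_on_shifted_parts:
  fixes lam :: "nat list"
  assumes "sorted_wrt (\<ge>) lam"
  shows "inj_on (\<lambda>k. real (shifted_parts lam k)) {..<length lam}"
  by (rule linorder_inj_onI') (use shifted_parts_strict_mono[OF assms] in fastforce)

lemma sum_shifted_parts:
  "(\<Sum>k<length lam. real (shifted_parts lam k))
   = real (psize lam) + real (length lam) * (real (length lam) - 1) / 2"
proof -
  have "(\<Sum>k<n. real k) = real n * (real n - 1) / 2" for n
    by (induction n) (auto simp: field_simps)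
  moreover have "(\<Sum>k<length lam. real (lam ! (length lam - 1 - k))) = real (psize lam)"
    using sum_reflect_lessThan[of "\<lambda>k. real (lam ! k)" "length lam"]
    by (simp add: psize_def sum_list_sum_nth atLeast0LessThan)
  ultimately show ?thesis
    by (simp add: shifted_parts_def sum.distrib)
qed

lemma shifted_parts_remove_corner:
  assumes "i \<in> corners lam" "k < length lam"
  shows "shifted_parts (remove_corner lam i) k
       = (if k = length lam - 1 - i then shifted_parts lam k - 1 else shifted_parts lam k)"
  using assms by (auto simp: shifted_parts_def remove_corner_def corners_def nth_list_update)

lemma shifted_parts_corner_pos: "i \<in> corners lam \<Longrightarrow> shifted_parts lam (length lam - 1 - i) \<ge> 1"
  unfolding corners_def shifted_parts_def by auto

text \<open>If row i is not a corner, then either row i+1 has the same length, so that lowering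
  the shifted part of row i makes it collide with that of row i+1, or row i is empty.\<close>

lemma decrement_term_eq_0_if_not_corner:
  fixes lam :: "nat list"
  assumes sorted: "sorted_wrt (\<ge>) lam" and i: "i < length lam" "i \<notin> corners lam"
  defines "x \<equiv> \<lambda>k. real (shifted_parts lam k)" and "j \<equiv> length lam - 1 - i"
  shows "x j * vandermonde_prod (length lam) (x(j := x j - 1)) = 0"
proof (cases "Suc i < length lam \<and> lam ! Suc i = lam ! i")
  case True
  then have "x (j - 1) = x j - 1" "j \<ge> 1"
    unfolding x_def j_def shifted_parts_def by (auto simp: Suc_diff_Suc)
  then have "vandermonde_prod (length lam) (x(j := x j - 1)) = 0"
    using j_def i by (intro vandermonde_prod_eq_0[of "j - 1" j]) auto
  then show ?thesis by simp
next
  case False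
  then have "\<not> Suc i < length lam" "lam ! i = 0"
    using i sorted_wrt_ge_nth_mono[OF sorted, of i "Suc i"] by (auto simp: corners_def)
  then have "i = length lam - 1" "lam ! i = 0"
    using i by auto
  then show ?thesis
    by (simp add: x_def j_def shifted_parts_def)
qed

lemma hook_product_remove_corner_mult_decrement_term:
  fixes lam :: "nat list"
  assumes sorted: "sorted_wrt (\<ge>) lam" and i: "i \<in> corners lam"
  defines "x \<equiv> \<lambda>k. real (shifted_parts lam k)" and "j \<equiv> length lam - 1 - i"
  shows "real (hook_product (remove_corner lam i)) * (x j * vandermonde_prod (length lam) (x(j := x j - 1)))
       = (\<Prod>k<length lam. fact (shifted_parts lam k))"
proof -
  let ?r = "length lam"
  let ?l = "remove_corner lam i"
  have j: "j < ?r" "shifted_parts lam j \<ge> 1"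
    using i shifted_parts_corner_pos[OF i] by (auto simp: j_def corners_def)
  have "vandermonde_prod ?r (\<lambda>k. real (shifted_parts ?l k)) = vandermonde_prod ?r (x(j := x j - 1))"
    using shifted_parts_remove_corner[OF i] j by (intro vandermonde_prod_cong) (auto simp: x_def j_def)
  moreover have "(\<Prod>k<?r. fact (shifted_parts ?l k) :: real) * x j = (\<Prod>k<?r. fact (shifted_parts lam k))"
  proof -
    have "(\<Prod>k<?r. fact (shifted_parts ?l k) :: real)
        = fact (shifted_parts lam j - 1) * (\<Prod>k\<in>{..<?r}-{j}. fact (shifted_parts lam k))"
      using j shifted_parts_remove_corner[OF i]
      by (subst prod.remove[of _ j]) (auto simp: j_def intro!: prod.cong)
    moreover have "(\<Prod>k<?r. fact (shifted_parts lam k) :: real)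
        = x j * fact (shifted_parts lam j - 1) * (\<Prod>k\<in>{..<?r}-{j}. fact (shifted_parts lam k))"
      using j by (subst prod.remove[of _ j]) (auto simp: x_def fact_reduce)
    ultimately show ?thesis by simp
  qed
  ultimately show ?thesis
    using hook_product_mult_vandermonde_prod[OF sorted_remove_corner[OF sorted i]]
    by (simp add: ac_simps)
qed

lemma sum_corners_decrement_terms:
  fixes lam :: "nat list"
  assumes sorted: "sorted_wrt (\<ge>) lam"
  defines "x \<equiv> \<lambda>k. real (shifted_parts lam k)"
  shows "(\<Sum>i\<in>corners lam. x (length lam - 1 - i)
            * vandermonde_prod (length lam) (x(length lam - 1 - i := x (length lam - 1 - i) - 1)))
       = real (psize lam) * vandermonde_prod (length lam) x"
proof -
  let ?r = "length lam"
  define g where "g j = x j * vandermonde_prod ?r (x(j := x j - 1))" for j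
  have "g (?r - 1 - i) = 0" if "i \<in> {..<?r} - corners lam" for i
    using that decrement_term_eq_0_if_not_corner[OF sorted] unfolding g_def x_def by blast
  then have "(\<Sum>i\<in>corners lam. g (?r - 1 - i)) = (\<Sum>i<?r. g (?r - 1 - i))"
    by (intro sum.mono_neutral_left) (auto simp: corners_def)
  also have "\<dots> = (\<Sum>j<?r. g j)"
    by (rule sum_reflect_lessThan)
  also have "\<dots> = real (psize lam) * vandermonde_prod ?r x"
    unfolding g_def sum_vandermonde_prod_decrements[OF inj_on_shifted_parts[OF sorted, folded x_def]]
    by (simp add: x_def sum_shifted_parts)
  finally show ?thesis
    unfolding g_def .
qed

theorem hook_length_formula:
  fixes lam :: "nat list"
  assumes "sorted_wrt (\<ge>) lam"
  shows "real (num_SYT lam) * real (hook_product lam) = fact (psize lam)"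
  using assms
proof (induction "psize lam" arbitrary: lam rule: less_induct)
  case less
  note sorted = less.prems
  show ?case
  proof (cases "psize lam = 0")
    case True
    then show ?thesis by (simp add: num_SYT_def card_SYT_psize_0 hook_product_psize_0)
  next
    case False
    let ?r = "length lam" and ?n = "psize lam"
    define x where "x = (\<lambda>k. real (shifted_parts lam k))"
    define P where "P = (\<Prod>k<?r. fact (shifted_parts lam k) :: real)"
    define g where "g j = x j * vandermonde_prod ?r (x(j := x j - 1))" for j
    have corner_term: "real (num_SYT (remove_corner lam i)) * P = fact (?n - 1) * g (?r - 1 - i)"
      if i: "i \<in> corners lam" for i
    proof -
      have "real (num_SYT (remove_corner lam i)) * real (hook_product (remove_corner lam i)) = fact (?n - 1)"
        using less.hyps[OF _ sorted_remove_corner[OF sorted i]] psize_remove_corner[OF i] False by simp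
      moreover have "real (hook_product (remove_corner lam i)) * g (?r - 1 - i) = P"
        unfolding P_def g_def x_def by (rule hook_product_remove_corner_mult_decrement_term[OF sorted i])
      ultimately show ?thesis
        by (metis mult.assoc mult.commute)
    qed
    have "real (num_SYT lam) * P = (\<Sum>i\<in>corners lam. real (num_SYT (remove_corner lam i)) * P)"
      using card_SYT_eq_sum_corners[OF sorted] False by (simp add: num_SYT_def sum_distrib_right)
    also have "\<dots> = fact (?n - 1) * (\<Sum>i\<in>corners lam. g (?r - 1 - i))"
      by (simp add: corner_term sum_distrib_left)
    also have "\<dots> = fact ?n * vandermonde_prod ?r x"
      unfolding g_def x_def sum_corners_decrement_terms[OF sorted]
      using False by (simp add: fact_reduce[of ?n])
    finally have "real (num_SYT lam) * P = fact ?n * vandermonde_prod ?r x" .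
    moreover have "P = real (hook_product lam) * vandermonde_prod ?r x"
      unfolding P_def x_def by (rule hook_product_mult_vandermonde_prod[OF sorted, symmetric])
    moreover have "vandermonde_prod ?r x \<noteq> 0"
      unfolding x_def by (rule vandermonde_prod_nonzero[OF inj_on_shifted_parts[OF sorted]])
    ultimately show ?thesis by simp
  qed
qed

section \<open>Wronskians of Appell sequences\<close>

lemma pderiv_phi_h:
  assumes "appell A"
  shows "pderiv (phi_h A m) = phi_h A (m - 1)"
proof -
  have A0: "A 0 = 1" and A': "\<And>n. n \<ge> 1 \<Longrightarrow> pderiv (A n) = smult (real n) (A (n - 1))"
    using assms by (auto simp: appell_def)
  consider "m \<le> 0" | "m = 1" | k where "m = int k" "k \<ge> 2"
  proof (cases "m \<ge> 2")
    case True
    then show thesis using that(3)[of "nat m"] by simp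
  qed (use that in linarith)
  then show ?thesis
  proof cases
    case 1
    then show ?thesis by (simp add: phi_h_def)
  next
    case 2
    then show ?thesis using A0 A'[of 1] by (simp add: phi_h_def pderiv_smult)
  next
    case 3
    have "1 / fact k * real k = (1 / fact (k - 1) :: real)"
      using 3 by (simp add: fact_reduce[of k] field_simps)
    then show ?thesis
      using 3 A'[of k] by (simp add: phi_h_def pderiv_smult nat_diff_distrib)
  qed
qed

lemma higher_pderiv_appell:
  assumes "appell A"
  shows "(pderiv ^^ i) (A n) = smult (fact n) (phi_h A (int n - int i))"
proof (induction i)
  case 0
  then show ?case
    using assms by (cases "n = 0") (auto simp: phi_h_def appell_def)
next
  case (Suc i)
  then show ?case
    by (simp add: pderiv_smult pderiv_phi_h[OF assms] algebra_simps)
qed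

lemma det_mat_scale_cols:
  fixes c :: "nat \<Rightarrow> 'a::comm_ring_1"
  shows "det (mat r r (\<lambda>(i, j). c j * B i j)) = (\<Prod>j<r. c j) * det (mat r r (\<lambda>(i, j). B i j))"
proof -
  have "signof p * (\<Prod>i = 0..<r. mat r r (\<lambda>(i, j). c j * B i j) $$ (i, p i))
      = (\<Prod>j<r. c j) * (signof p * (\<Prod>i = 0..<r. mat r r (\<lambda>(i, j). B i j) $$ (i, p i)))"
    if p: "p permutes {0..<r}" for p
  proof -
    have "(\<Prod>i = 0..<r. mat r r (\<lambda>(i, j). c j * B i j) $$ (i, p i))
        = (\<Prod>i = 0..<r. c (p i)) * (\<Prod>i = 0..<r. mat r r (\<lambda>(i, j). B i j) $$ (i, p i))"
      using p by (simp add: prod.distrib[symmetric] permutes_in_image)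
    moreover have "(\<Prod>i = 0..<r. c (p i)) = (\<Prod>j<r. c j)"
      using prod.permute[OF p, of c] by (simp add: comp_def atLeast0LessThan)
    ultimately show ?thesis by (simp add: ac_simps)
  qed
  then show ?thesis
    by (simp add: det_def'[of _ r] sum_distrib_left)
qed

text \<open>Reflecting a square matrix in its anti-diagonal reverses both rows and columns and
  transposes; the two reversals have the same sign.\<close>

lemma det_antitranspose:
  fixes f :: "nat \<Rightarrow> nat \<Rightarrow> 'a::comm_ring_1"
  shows "det (mat r r (\<lambda>(i, j). f (r - 1 - j) (r - 1 - i))) = det (mat r r (\<lambda>(i, j). f i j))"
proof -
  define rev where "rev i = (if i < r then r - 1 - i else i)" for i
  have rev: "rev permutes {0..<r}"
    by (rule bij_imp_permutes) (auto simp: rev_def intro!: bij_betw_byWitness[where f' = rev])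
  let ?F = "mat r r (\<lambda>(i, j). f i j)"
  let ?G = "transpose_mat (mat r r (\<lambda>(i, j). ?F $$ (rev i, j)))"
  have "mat r r (\<lambda>(i, j). f (r - 1 - j) (r - 1 - i)) = mat r r (\<lambda>(i, j). ?G $$ (rev i, j))"
    by (rule eq_matI) (auto simp: rev_def)
  also have "det \<dots> = signof rev * det ?G"
    by (rule det_permute_rows[OF _ rev]) simp
  also have "det ?G = det (mat r r (\<lambda>(i, j). ?F $$ (rev i, j)))"
    by (rule det_transpose[of _ r]) simp
  also have "\<dots> = signof rev * det ?F"
    by (rule det_permute_rows[OF _ rev]) simp
  also have "signof rev * (signof rev * det ?F) = ((signof rev * signof rev) :: 'a) * det ?F"
    by (simp only: mult.assoc)
  also have "(signof rev * signof rev :: 'a) = 1"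
    by (simp flip: of_int_mult)
  finally show ?thesis by simp
qed

lemma wronskian_eq_prod_fact_phi_schur:
  assumes "appell A"
  shows "wronskian (length lam) (\<lambda>j. A (shifted_parts lam j))
       = smult (\<Prod>j<length lam. fact (shifted_parts lam j)) (phi_schur A lam)"
proof -
  let ?r = "length lam"
  define f where "f = (\<lambda>a b. phi_h A (int (lam ! a) - int a + int b))"
  have "wronskian ?r (\<lambda>j. A (shifted_parts lam j))
      = det (mat ?r ?r (\<lambda>(i, j). [:fact (shifted_parts lam j):] * f (?r - 1 - j) (?r - 1 - i)))"
    unfolding wronskian_def
    by (intro arg_cong[where f = det] eq_matI)
       (auto simp: higher_pderiv_appell[OF assms] f_def shifted_parts_def algebra_simps)
  also have "\<dots> = (\<Prod>j<?r. [:fact (shifted_parts lam j):]) * det (mat ?r ?r (\<lambda>(i, j). f (?r - 1 - j) (?r - 1 - i)))"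
    by (rule det_mat_scale_cols)
  also have "det (mat ?r ?r (\<lambda>(i, j). f (?r - 1 - j) (?r - 1 - i))) = phi_schur A lam"
    unfolding det_antitranspose by (simp add: phi_schur_def f_def)
  finally show ?thesis
    by (simp add: prod_to_poly)
qed

lemma wronskian_appell_eq_hook_product_phi_schur:
  fixes lam :: "nat list"
  assumes "appell A" and "sorted_wrt (\<ge>) lam"
  shows "wronskian_appell A lam = smult (real (hook_product lam)) (phi_schur A lam)"
proof -
  let ?V = "vandermonde_prod (length lam) (\<lambda>k. real (shifted_parts lam k))"
  have "?V \<noteq> 0"
    by (rule vandermonde_prod_nonzero[OF inj_on_shifted_parts[OF assms(2)]])
  then have "(\<Prod>k<length lam. fact (shifted_parts lam k)) / ?V = real (hook_product lam)"
    by (simp flip: hook_product_mult_vandermonde_prod[OF assms(2)])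
  then show ?thesis
    by (simp add: wronskian_appell_def wronskian_eq_prod_fact_phi_schur[OF assms(1)]
                  vandermonde_eq_vandermonde_prod)
qed

theorem theorem4p1:
  fixes A :: "nat \<Rightarrow> real poly" and lam :: "nat list"
  assumes "appell A" and "partition lam"
  shows "phi_schur A lam = smult (1 / real (hook_product lam)) (wronskian_appell A lam)
       \<and> phi_schur A lam = smult (real (num_SYT lam) / fact (psize lam)) (wronskian_appell A lam)"
proof -
  have sorted: "sorted_wrt (\<ge>) lam"
    using assms(2) by (simp add: partition_def)
  have hook_length: "real (num_SYT lam) * real (hook_product lam) = fact (psize lam)"
    by (rule hook_length_formula[OF sorted])
  then have "num_SYT lam \<noteq> 0" "hook_product lam \<noteq> 0"
    using fact_nonzero[of "psize lam", where 'a = real] by (metis mult_eq_0_iff of_nat_eq_0_iff)+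
  then have "real (num_SYT lam) / fact (psize lam) = 1 / real (hook_product lam)"
    by (simp flip: hook_length)
  then show ?thesis
    using \<open>hook_product lam \<noteq> 0\<close>
    by (simp add: wronskian_appell_eq_hook_product_phi_schur[OF assms(1) sorted])
qed

end
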